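(* Let $q\ge2$, $n\ge2$, $X=\{0,\ldots,q-1\}$, and let $\mathcal{L}=\{L_1,\ldots,L_k\}$ be a partition of $X^n$ with respect to which the Insect Markov chain on $X^n$ is lumpable. For each $i$ let $L_i'\subseteq X^{n-1}$ be the set of words obtained by deleting the last letter from the elements of $L_i$, and let $\mathcal{L}'=\{L_1',\ldots,L_h'\}$ be the collection of distinct sets among $L_1',\dots,L_k'$ (which is a partition of $X^{n-1}$). Then the Insect Markov chain on $X^{n-1}$ is lumpable with respect to $\mathcal{L}'$.
   Context: For $m\ge1$ and $x,y\in X^m$, $d(x,y)=m-\max\{\ell\in\{0,\ldots,m\}: x_1\cdots x_\ell=y_1\cdots y_\ell\}$. The Insect Markov chain on $X^m$: set $\alpha_j=\frac{q^j-1}{q^{j+1}-1}$ for $1\le j\le m-1$, $\alpha_m=0$; transition probabilities are $p(x,y)=q^{-1}(1-\alpha_1)+\sum_{i=2}^mq^{-i}\alpha_1\cdots\alpha_{i-1}(1-\alpha_i)$ if $d(x,y)\in\{0,1\}$, and $p(x,y)=\sum_{i=j}^mq^{-i}\alpha_1\cdots\alpha_{i-1}(1-\alpha_i)$ if $d(x,y)=j>1$. A chain is lumpable with respect to a partition if for all parts $L,L'$ the map $x\mapsto\sum_{y\in L'}p(x,y)$ is constant on $L$. *)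

theory Defs
  imports Complex_Main "HOL-Library.Disjoint_Sets"
begin

definition words :: "nat \<Rightarrow> nat \<Rightarrow> nat list set" where
  "words q m = {w. length w = m \<and> set w \<subseteq> {..<q}}"

definition insect_dist :: "nat \<Rightarrow> nat list \<Rightarrow> nat list \<Rightarrow> nat" where
  "insect_dist m x y = m - Max {l. l \<le> m \<and> take l x = take l y}"

definition insect_alpha :: "nat \<Rightarrow> nat \<Rightarrow> nat \<Rightarrow> real" where
  "insect_alpha q m j = (if j = m then 0 else (real q ^ j - 1) / (real q ^ (j + 1) - 1))"

definition insect_term :: "nat \<Rightarrow> nat \<Rightarrow> nat \<Rightarrow> real" where
  "insect_term q m i = (1 / real q ^ i) * (\<Prod>l\<in>{1..<i}. insect_alpha q m l) * (1 - insect_alpha q m i)"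

definition insect_p :: "nat \<Rightarrow> nat \<Rightarrow> nat list \<Rightarrow> nat list \<Rightarrow> real" where
  "insect_p q m x y =
     (if insect_dist m x y \<in> {0, 1}
      then (1 / real q) * (1 - insect_alpha q m 1) + (\<Sum>i\<in>{2..m}. insect_term q m i)
      else (\<Sum>i\<in>{insect_dist m x y..m}. insect_term q m i))"

definition insect_lumpable :: "nat \<Rightarrow> nat \<Rightarrow> nat list set set \<Rightarrow> bool" where
  "insect_lumpable q m P \<longleftrightarrow> partition_on (words q m) P \<and>
     (\<forall>L\<in>P. \<forall>L'\<in>P. \<forall>x\<in>L. \<forall>x'\<in>L.
        (\<Sum>y\<in>L'. insect_p q m x y) = (\<Sum>y\<in>L'. insect_p q m x' y))"

end

theory Submission
  imports Defs
begin

text \<open>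
  The transition operator of the Insect chain on \<open>X\<^sup>n\<close> is a positive combination
  \<open>\<Sum>\<^sub>i c\<^sub>i A\<^sub>n\<^sub>-\<^sub>i\<close> of the operators \<open>A\<^sub>j\<close> that average a function over all words sharing
  its prefix of length \<open>j\<close>. The increments \<open>A\<^sub>k - A\<^sub>k\<^sub>-\<^sub>1\<close> are eigenvectors of this operator
  with the pairwise distinct eigenvalues \<open>c\<^sub>1 + \<dots> + c\<^sub>n\<^sub>-\<^sub>k\<close>, and they add up to the identity.
  Lumpability says that the space of functions constant on the blocks is invariant under the
  operator; hence it contains each eigencomponent of its elements, i.e. it is invariant under
  every \<open>A\<^sub>j\<close>. Invariance under \<open>A\<^sub>n\<^sub>-\<^sub>1\<close> applied to indicators of blocks shows that two blocks
  whose truncations meet have equal truncations, so the truncated blocks partition \<open>X\<^sup>n\<^sup>-\<^sup>1\<close>;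
  invariance under the other \<open>A\<^sub>j\<close>, applied to indicators of truncated blocks lifted back to
  \<open>X\<^sup>n\<close>, gives the lumpability of the chain on \<open>X\<^sup>n\<^sup>-\<^sup>1\<close>.
\<close>

section \<open>Words and prefixes\<close>

lemma words_eq_lists_length: "words q m = {xs. set xs \<subseteq> {..<q} \<and> length xs = m}"
  by (auto simp: words_def)

lemma finite_words [simp]: "finite (words q m)"
  by (simp add: words_eq_lists_length finite_lists_length_eq)

lemma card_words: "card (words q m) = q ^ m"
  by (simp add: words_eq_lists_length card_lists_length_eq)

lemma take_eq_take_le: "take a y = take a x \<Longrightarrow> b \<le> a \<Longrightarrow> take b y = take b x"
  by (metis min.absorb1 take_take)

lemma card_words_same_prefix:
  assumes "x \<in> words q n" "j \<le> n"
  shows "card {y\<in>words q n. take j y = take j x} = q ^ (n - j)"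
proof -
  have "bij_betw (\<lambda>w. take j x @ w) (words q (n - j)) {y\<in>words q n. take j y = take j x}"
  proof (rule bij_betw_imageI)
    show "inj_on (\<lambda>w. take j x @ w) (words q (n - j))"
      by (auto simp: inj_on_def)
    show "(\<lambda>w. take j x @ w) ` words q (n - j) = {y\<in>words q n. take j y = take j x}"
    proof (intro equalityI subsetI)
      fix y assume "y \<in> (\<lambda>w. take j x @ w) ` words q (n - j)"
      then show "y \<in> {y\<in>words q n. take j y = take j x}"
        using assms by (auto simp: words_def dest!: in_set_takeD)
    next
      fix y assume y: "y \<in> {y\<in>words q n. take j y = take j x}"
      then have "y = take j x @ drop j y"
        by (metis (mono_tags) append_take_drop_id mem_Collect_eq)
      moreover have "drop j y \<in> words q (n - j)"
        using y by (auto simp: words_def dest: in_set_dropD)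
      ultimately show "y \<in> (\<lambda>w. take j x @ w) ` words q (n - j)"
        by blast
    qed
  qed
  from bij_betw_same_card[OF this] show ?thesis
    by (simp add: card_words)
qed

lemma sum_words_same_prefix_one:
  assumes "x \<in> words q n" "j \<le> n"
  shows "(\<Sum>y\<in>words q n. if take j y = take j x then 1 else 0 :: real) = real q ^ (n - j)"
proof -
  have "(\<Sum>y\<in>words q n. if take j y = take j x then 1 else 0 :: real)
      = real (card (words q n \<inter> {y. take j y = take j x}))"
    by (simp flip: of_bool_def)
  also have "words q n \<inter> {y. take j y = take j x} = {y\<in>words q n. take j y = take j x}"
    by auto
  finally show ?thesis
    using card_words_same_prefix[OF assms] by simp
qed

lemma sum_words_Suc:
  "(\<Sum>y\<in>words q (Suc m). F y) = (\<Sum>a\<in>words q m. \<Sum>c\<in>{..<q}. F (a @ [c]))"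
proof -
  have "bij_betw (\<lambda>(a, c). a @ [c]) (words q m \<times> {..<q}) (words q (Suc m))"
  proof (rule bij_betw_imageI)
    show "inj_on (\<lambda>(a, c). a @ [c]) (words q m \<times> {..<q})"
      by (auto simp: inj_on_def)
    show "(\<lambda>(a, c). a @ [c]) ` (words q m \<times> {..<q}) = words q (Suc m)"
    proof (intro equalityI subsetI)
      fix y assume "y \<in> (\<lambda>(a, c). a @ [c]) ` (words q m \<times> {..<q})"
      then show "y \<in> words q (Suc m)"
        by (auto simp: words_def)
    next
      fix y assume y: "y \<in> words q (Suc m)"
      then have ne: "y \<noteq> []"
        by (auto simp: words_def)
      have "butlast y \<in> words q m"
        using y ne by (auto simp: words_def dest: in_set_butlastD)
      moreover have "last y < q"
        using y last_in_set[OF ne] by (auto simp: words_def)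
      ultimately show "y \<in> (\<lambda>(a, c). a @ [c]) ` (words q m \<times> {..<q})"
        using ne by (intro image_eqI[where x = "(butlast y, last y)"]) auto
    qed
  qed
  then have "(\<Sum>y\<in>words q (Suc m). F y) = (\<Sum>(a, c)\<in>words q m \<times> {..<q}. F (a @ [c]))"
    by (simp add: sum.reindex_bij_betw[symmetric] case_prod_beta')
  then show ?thesis
    by (simp add: sum.cartesian_product)
qed

lemma butlast_words:
  assumes "q \<ge> 1"
  shows "butlast ` words q (Suc m) = words q m"
proof (intro equalityI subsetI)
  fix w assume "w \<in> butlast ` words q (Suc m)"
  then show "w \<in> words q m"
    by (auto simp: words_def dest: in_set_butlastD)
next
  fix w assume "w \<in> words q m"
  then have "w @ [0] \<in> words q (Suc m)"
    using assms by (auto simp: words_def)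
  then show "w \<in> butlast ` words q (Suc m)"
    by (metis butlast_snoc image_eqI)
qed

section \<open>Averaging over a common prefix\<close>

definition prefix_avg :: "nat \<Rightarrow> nat \<Rightarrow> nat \<Rightarrow> (nat list \<Rightarrow> real) \<Rightarrow> nat list \<Rightarrow> real" where
  "prefix_avg q n j f x = (if x \<in> words q n then
     (\<Sum>y\<in>words q n. if take j y = take j x then f y else 0) / real q ^ (n - j) else 0)"

lemma sum_same_prefix_eq_prefix_avg:
  assumes "x \<in> words q n" "q \<ge> 1"
  shows "(\<Sum>y\<in>words q n. if take j y = take j x then f y else 0) = real q ^ (n - j) * prefix_avg q n j f x"
  using assms by (simp add: prefix_avg_def)

lemma prefix_avg_full:
  assumes "x \<in> words q n"
  shows "prefix_avg q n n f x = f x"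
proof -
  have "(\<Sum>y\<in>words q n. if take n y = take n x then f y else 0) = (\<Sum>y\<in>words q n. if y = x then f y else 0)"
    by (rule sum.cong) (use assms in \<open>auto simp: words_def\<close>)
  then show ?thesis
    using assms by (simp add: prefix_avg_def)
qed

lemma prefix_avg_diff: "prefix_avg q n j (\<lambda>x. f x - g x) x = prefix_avg q n j f x - prefix_avg q n j g x"
  by (simp add: prefix_avg_def diff_divide_distrib[symmetric] sum_subtractf[symmetric] if_distrib
      cong: if_cong)

lemma prefix_avg_prefix_avg_le:
  assumes "a \<le> b" "b \<le> n" "q \<ge> 1"
  shows "prefix_avg q n a (prefix_avg q n b f) x = prefix_avg q n a f x"
proof (cases "x \<in> words q n")
  case False
  then show ?thesis by (simp add: prefix_avg_def)
next
  case xW: True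
  let ?W = "words q n"
  have "(\<Sum>y\<in>?W. if take a y = take a x then prefix_avg q n b f y else 0)
      = (\<Sum>y\<in>?W. \<Sum>z\<in>?W. if take a y = take a x \<and> take b z = take b y then f z / real q ^ (n - b) else 0)"
    by (rule sum.cong) (auto simp: prefix_avg_def sum_divide_distrib intro!: sum.cong)
  also have "\<dots> = (\<Sum>z\<in>?W. \<Sum>y\<in>?W. if take a y = take a x \<and> take b z = take b y then f z / real q ^ (n - b) else 0)"
    by (rule sum.swap)
  also have "\<dots> = (\<Sum>z\<in>?W. if take a z = take a x then f z else 0)"
  proof (rule sum.cong [OF refl])
    fix z assume zW: "z \<in> ?W"
    show "(\<Sum>y\<in>?W. if take a y = take a x \<and> take b z = take b y then f z / real q ^ (n - b) else 0)
        = (if take a z = take a x then f z else 0)"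
    proof (cases "take a z = take a x")
      case True
      have "(\<Sum>y\<in>?W. if take a y = take a x \<and> take b z = take b y then f z / real q ^ (n - b) else 0)
          = f z / real q ^ (n - b) * (\<Sum>y\<in>?W. if take b y = take b z then 1 else 0)"
        unfolding sum_distrib_left
        by (rule sum.cong) (use True assms(1) in \<open>auto dest: take_eq_take_le\<close>)
      then show ?thesis
        using True assms by (simp add: sum_words_same_prefix_one[OF zW])
    next
      case False
      have "\<not> (take a y = take a x \<and> take b z = take b y)" for y
        using False assms(1) take_eq_take_le[of b z y a] by auto
      then show ?thesis
        using False by (simp add: sum.neutral del: de_Morgan_conj)
    qed
  qed
  finally show ?thesis
    using xW by (simp add: prefix_avg_def)
qed

lemma prefix_avg_prefix_avg_ge:
  assumes "b \<le> a" "a \<le> n" "q \<ge> 1"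
  shows "prefix_avg q n a (prefix_avg q n b f) x = prefix_avg q n b f x"
proof (cases "x \<in> words q n")
  case False
  then show ?thesis by (simp add: prefix_avg_def)
next
  case xW: True
  \<comment> \<open>\<open>prefix_avg q n b f\<close> only depends on the first \<open>b \<le> a\<close> letters\<close>
  have "(\<Sum>y\<in>words q n. if take a y = take a x then prefix_avg q n b f y else 0)
      = prefix_avg q n b f x * (\<Sum>y\<in>words q n. if take a y = take a x then 1 else 0)"
    unfolding sum_distrib_left
    by (rule sum.cong) (use assms xW in \<open>auto simp: prefix_avg_def dest: take_eq_take_le\<close>)
  then show ?thesis
    using xW assms by (simp add: prefix_avg_def sum_words_same_prefix_one)
qed

lemma prefix_avg_prefix_avg:
  assumes "a \<le> n" "b \<le> n" "q \<ge> 1"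
  shows "prefix_avg q n a (prefix_avg q n b f) x = prefix_avg q n (min a b) f x"
  using assms prefix_avg_prefix_avg_le prefix_avg_prefix_avg_ge
  by (cases "a \<le> b") (auto simp: min_def)

lemma prefix_avg_indicator_pos_iff:
  assumes "M \<subseteq> words q n" "x \<in> words q n" "q \<ge> 1"
  shows "prefix_avg q n j (\<lambda>y. if y \<in> M then 1 else 0) x > 0 \<longleftrightarrow> (\<exists>y\<in>M. take j y = take j x)"
proof -
  let ?s = "\<Sum>y\<in>words q n. if take j y = take j x then (if y \<in> M then 1 else 0) else 0 :: real"
  have "?s = 0 \<longleftrightarrow> \<not> (\<exists>y\<in>words q n. take j y = take j x \<and> y \<in> M)"
    by (subst sum_nonneg_eq_0_iff) auto
  moreover have "?s \<ge> 0"
    by (rule sum_nonneg) simp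
  ultimately have "?s > 0 \<longleftrightarrow> (\<exists>y\<in>words q n. take j y = take j x \<and> y \<in> M)"
    by linarith
  moreover have "real q ^ (n - j) > 0"
    using assms by simp
  ultimately show ?thesis
    using assms by (auto simp: prefix_avg_def zero_less_divide_iff)
qed

lemma sum_same_prefix_butlast:
  assumes "x \<in> words q (Suc m)" "j \<le> m"
  shows "real q * (\<Sum>y\<in>words q m. if take j y = take j (butlast x) then g y else 0)
       = (\<Sum>y\<in>words q (Suc m). if take j y = take j x then g (butlast y) else 0)"
proof -
  have x: "take j (butlast x) = take j x"
    using assms by (simp add: words_def take_butlast)
  have "(\<Sum>c<q. if take j (a @ [c]) = take j x then g (butlast (a @ [c])) else 0)
      = real q * (if take j a = take j (butlast x) then g a else 0)" if "a \<in> words q m" for a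
    using that assms x by (simp add: words_def)
  then show ?thesis
    by (simp add: sum_words_Suc sum_distrib_left)
qed

section \<open>The Insect kernel as a combination of prefix averages\<close>

lemma insect_dist_le_iff:
  assumes "i \<le> m"
  shows "insect_dist m x y \<le> i \<longleftrightarrow> take (m - i) x = take (m - i) y"
proof -
  let ?S = "{l. l \<le> m \<and> take l x = take l y}"
  have fin: "finite ?S"
    by (rule finite_subset[of _ "{..m}"]) auto
  have max: "Max ?S \<in> ?S"
    using fin by (intro Max_in) auto
  show ?thesis
  proof
    assume "insect_dist m x y \<le> i"
    then have "m - i \<le> Max ?S"
      using max by (simp add: insect_dist_def)
    then show "take (m - i) x = take (m - i) y"
      using max take_eq_take_le by blast
  next
    assume "take (m - i) x = take (m - i) y"
    then have "m - i \<le> Max ?S"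
      using fin by (intro Max_ge) auto
    then show "insect_dist m x y \<le> i"
      by (simp add: insect_dist_def)
  qed
qed

lemma insect_p_eq_sum_prefix:
  assumes "m \<ge> 1"
  shows "insect_p q m x y = (\<Sum>i\<in>{1..m}. if take (m - i) x = take (m - i) y then insect_term q m i else 0)"
proof -
  let ?d = "insect_dist m x y"
  have "(\<Sum>i\<in>{1..m}. if take (m - i) x = take (m - i) y then insect_term q m i else 0)
      = (\<Sum>i\<in>{1..m}. if ?d \<le> i then insect_term q m i else 0)"
    by (rule sum.cong) (auto simp: insect_dist_le_iff)
  also have "\<dots> = (\<Sum>i\<in>{i\<in>{1..m}. ?d \<le> i}. insect_term q m i)"
    by (rule sum.inter_filter[symmetric]) simp
  also have "\<dots> = insect_p q m x y"
  proof (cases "?d \<in> {0, 1}")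
    case True
    then have "{i\<in>{1..m}. ?d \<le> i} = insert 1 {2..m}"
      using assms by auto
    then show ?thesis
      using True by (simp add: insect_p_def insect_term_def)
  next
    case False
    then have "{i\<in>{1..m}. ?d \<le> i} = {?d..m}"
      by auto
    then show ?thesis
      using False by (simp add: insect_p_def)
  qed
  finally show ?thesis ..
qed

lemma sum_insect_p_eq_sum_prefix:
  assumes "m \<ge> 1" "M \<subseteq> words q m"
  shows "(\<Sum>y\<in>M. insect_p q m x y) = (\<Sum>i\<in>{1..m}. insect_term q m i *
     (\<Sum>y\<in>words q m. if take (m - i) y = take (m - i) x then (if y \<in> M then 1 else 0) else 0))"
proof -
  have "(\<Sum>y\<in>M. insect_p q m x y) = (\<Sum>y\<in>words q m. if y \<in> M then insect_p q m x y else 0)"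
    using assms(2) sum.inter_restrict[of "words q m" "insect_p q m x" M] by (simp add: Int_absorb1)
  also have "\<dots> = (\<Sum>y\<in>words q m. \<Sum>i\<in>{1..m}. insect_term q m i *
      (if take (m - i) y = take (m - i) x then (if y \<in> M then 1 else 0) else 0))"
    by (rule sum.cong) (auto simp: insect_p_eq_sum_prefix[OF assms(1)] intro!: sum.cong)
  also have "\<dots> = (\<Sum>i\<in>{1..m}. insect_term q m i *
     (\<Sum>y\<in>words q m. if take (m - i) y = take (m - i) x then (if y \<in> M then 1 else 0) else 0))"
    by (simp add: sum.swap[of _ "words q m"] sum_distrib_left)
  finally show ?thesis .
qed

definition insect_op :: "nat \<Rightarrow> nat \<Rightarrow> (nat list \<Rightarrow> real) \<Rightarrow> nat list \<Rightarrow> real" where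
  "insect_op q n f x = (if x \<in> words q n then (\<Sum>y\<in>words q n. insect_p q n x y * f y) else 0)"

lemma insect_op_eq_sum_prefix_avg:
  assumes "n \<ge> 1" "q \<ge> 1"
  shows "insect_op q n f x = (\<Sum>i\<in>{1..n}. insect_term q n i * real q ^ i * prefix_avg q n (n - i) f x)"
proof (cases "x \<in> words q n")
  case False
  then show ?thesis by (simp add: insect_op_def prefix_avg_def)
next
  case xW: True
  let ?W = "words q n"
  have "insect_op q n f x
      = (\<Sum>y\<in>?W. \<Sum>i\<in>{1..n}. insect_term q n i * (if take (n - i) y = take (n - i) x then f y else 0))"
    using xW by (auto simp: insect_op_def insect_p_eq_sum_prefix[OF assms(1)] sum_distrib_right
        intro!: sum.cong)
  also have "\<dots> = (\<Sum>i\<in>{1..n}. insect_term q n i * (\<Sum>y\<in>?W. if take (n - i) y = take (n - i) x then f y else 0))"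
    by (simp add: sum.swap[of _ ?W] sum_distrib_left)
  also have "\<dots> = (\<Sum>i\<in>{1..n}. insect_term q n i * real q ^ i * prefix_avg q n (n - i) f x)"
    by (rule sum.cong) (use xW assms in \<open>auto simp: sum_same_prefix_eq_prefix_avg\<close>)
  finally show ?thesis .
qed

section \<open>Spectral decomposition of the Insect operator\<close>

lemma insect_alpha_bounds:
  assumes "q \<ge> 2" "1 \<le> l" "l < m"
  shows "0 < insect_alpha q m l" "insect_alpha q m l < 1"
proof -
  have "real q ^ l \<ge> real q"
    using assms by (simp add: power_increasing[of 1 l, simplified])
  then have ql: "real q ^ l \<ge> 2"
    using assms by linarith
  moreover have "real q ^ (l + 1) > real q ^ l"
    using assms by (intro power_strict_increasing) auto
  ultimately show "0 < insect_alpha q m l" "insect_alpha q m l < 1"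
    using assms by (simp_all add: insect_alpha_def divide_less_eq del: power_Suc)
qed

lemma insect_term_pos:
  assumes "q \<ge> 2" "1 \<le> i" "i \<le> m"
  shows "insect_term q m i > 0"
proof -
  have "(\<Prod>l\<in>{1..<i}. insect_alpha q m l) > 0"
    using assms insect_alpha_bounds(1) by (intro prod_pos) auto
  moreover have "insect_alpha q m i < 1"
    using assms insect_alpha_bounds(2)[of q i m] by (cases "i = m") (auto simp: insect_alpha_def)
  ultimately show ?thesis
    using assms by (simp add: insect_term_def)
qed

definition prefix_avg_increment :: "nat \<Rightarrow> nat \<Rightarrow> nat \<Rightarrow> (nat list \<Rightarrow> real) \<Rightarrow> nat list \<Rightarrow> real" where
  "prefix_avg_increment q n k f =
     (if k = 0 then prefix_avg q n 0 f else (\<lambda>x. prefix_avg q n k f x - prefix_avg q n (k - 1) f x))"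

definition insect_eigenvalue :: "nat \<Rightarrow> nat \<Rightarrow> nat \<Rightarrow> real" where
  "insect_eigenvalue q n k = (\<Sum>i\<in>{1..n - k}. insect_term q n i * real q ^ i)"

lemma sum_prefix_avg_increment: "(\<Sum>k\<in>{0..j}. prefix_avg_increment q n k f x) = prefix_avg q n j f x"
  by (induction j) (simp_all add: prefix_avg_increment_def)

lemma prefix_avg_prefix_avg_increment:
  assumes "j \<le> n" "k \<le> n" "q \<ge> 1"
  shows "prefix_avg q n j (prefix_avg_increment q n k f) x = (if k \<le> j then prefix_avg_increment q n k f x else 0)"
proof (cases "k = 0")
  case True
  then show ?thesis
    using assms by (simp add: prefix_avg_increment_def prefix_avg_prefix_avg)
next
  case False
  then have "prefix_avg q n j (prefix_avg_increment q n k f) x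
      = prefix_avg q n (min j k) f x - prefix_avg q n (min j (k - 1)) f x"
    using assms by (simp add: prefix_avg_increment_def prefix_avg_diff prefix_avg_prefix_avg)
  then show ?thesis
    using False by (auto simp: prefix_avg_increment_def min_def)
qed

lemma insect_op_prefix_avg_increment:
  assumes "n \<ge> 1" "q \<ge> 1" "k \<le> n"
  shows "insect_op q n (prefix_avg_increment q n k f) = (\<lambda>x. insect_eigenvalue q n k * prefix_avg_increment q n k f x)"
proof
  fix x
  have "insect_op q n (prefix_avg_increment q n k f) x
      = (\<Sum>i\<in>{1..n}. if k \<le> n - i then insect_term q n i * real q ^ i * prefix_avg_increment q n k f x else 0)"
    using assms by (simp add: insect_op_eq_sum_prefix_avg prefix_avg_prefix_avg_increment if_distrib
        cong: if_cong)
  also have "\<dots> = (\<Sum>i\<in>{i\<in>{1..n}. k \<le> n - i}. insect_term q n i * real q ^ i * prefix_avg_increment q n k f x)"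
    by (rule sum.inter_filter[symmetric]) simp
  also have "{i\<in>{1..n}. k \<le> n - i} = {1..n - k}"
    by auto
  finally show "insect_op q n (prefix_avg_increment q n k f) x = insect_eigenvalue q n k * prefix_avg_increment q n k f x"
    by (simp add: insect_eigenvalue_def sum_distrib_right)
qed

lemma insect_eigenvalue_strict_antimono:
  assumes "q \<ge> 2" "k < k'" "k' \<le> n"
  shows "insect_eigenvalue q n k' < insect_eigenvalue q n k"
proof -
  have sub: "{1..n - k'} \<subseteq> {1..n - k}"
    using assms by auto
  have "(\<Sum>i\<in>{1..n - k} - {1..n - k'}. insect_term q n i * real q ^ i) > 0"
    using assms by (intro sum_pos) (auto intro!: mult_pos_pos insect_term_pos)
  then show ?thesis
    using sum.subset_diff[OF sub, of "\<lambda>i. insect_term q n i * real q ^ i"]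
    by (simp add: insect_eigenvalue_def)
qed

lemma inj_on_insect_eigenvalue: "q \<ge> 2 \<Longrightarrow> inj_on (insect_eigenvalue q n) {0..n}"
  unfolding inj_on_def
  by (metis atLeastAtMost_iff insect_eigenvalue_strict_antimono less_irrefl linorder_neqE_nat)

lemma eigencomponents_in_invariant_subspace:
  fixes T :: "('a \<Rightarrow> real) \<Rightarrow> 'a \<Rightarrow> real" and V :: "('a \<Rightarrow> real) set"
    and g :: "'k \<Rightarrow> 'a \<Rightarrow> real" and eig :: "'k \<Rightarrow> real"
  assumes add: "\<And>f h. f \<in> V \<Longrightarrow> h \<in> V \<Longrightarrow> (\<lambda>x. f x + h x) \<in> V"
    and scale: "\<And>f c. f \<in> V \<Longrightarrow> (\<lambda>x. c * f x) \<in> V"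
    and invariant: "\<And>f. f \<in> V \<Longrightarrow> T f \<in> V"
    and T_add: "\<And>f h. T (\<lambda>x. f x + h x) = (\<lambda>x. T f x + T h x)"
    and T_scale: "\<And>f c. T (\<lambda>x. c * f x) = (\<lambda>x. c * T f x)"
    and "finite S"
    and "\<And>k. k \<in> S \<Longrightarrow> T (g k) = (\<lambda>x. eig k * g k x)"
    and "inj_on eig S"
    and "(\<lambda>x. \<Sum>k\<in>S. g k x) \<in> V"
  shows "\<forall>k\<in>S. g k \<in> V"
  using assms(6-9)
proof (induction S arbitrary: g rule: finite_induct)
  case empty
  then show ?case by simp
next
  case (insert k0 S)
  let ?f = "\<lambda>x. \<Sum>k\<in>insert k0 S. g k x"
  have T_sum: "T (\<lambda>x. \<Sum>k\<in>A. u k x) = (\<lambda>x. \<Sum>k\<in>A. T (u k) x)" if "finite A" for A and u :: "'k \<Rightarrow> 'a \<Rightarrow> real"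
    using that T_scale[of 0 "\<lambda>x. 0"] by (induction A rule: finite_induct) (simp_all add: T_add)
  have V_sum: "(\<lambda>x. \<Sum>k\<in>A. u k x) \<in> V" if "finite A" "\<forall>k\<in>A. u k \<in> V" for A and u :: "'k \<Rightarrow> 'a \<Rightarrow> real"
    using that scale[OF insert.prems(3), of 0] by (induction A rule: finite_induct) (simp_all add: add)
  have "T ?f = (\<lambda>x. \<Sum>k\<in>insert k0 S. T (g k) x)"
    using insert.hyps by (intro T_sum) simp
  also have "\<dots> = (\<lambda>x. \<Sum>k\<in>insert k0 S. eig k * g k x)"
    using insert.prems(1) by simp
  finally have T_f: "T ?f = (\<lambda>x. \<Sum>k\<in>insert k0 S. eig k * g k x)" .
  \<comment> \<open>\<open>T f - eig k0 \<cdot> f\<close> kills the component \<open>g k0\<close> and rescales the others by nonzero factors\<close>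
  have "(\<lambda>x. T ?f x + (- eig k0) * ?f x) \<in> V"
    using add[OF invariant[OF insert.prems(3)] scale[OF insert.prems(3)]] .
  also have "(\<lambda>x. T ?f x + (- eig k0) * ?f x) = (\<lambda>x. \<Sum>k\<in>insert k0 S. (eig k - eig k0) * g k x)"
    unfolding T_f left_diff_distrib sum_subtractf sum_distrib_left[symmetric] by simp
  also have "\<dots> = (\<lambda>x. \<Sum>k\<in>S. (eig k - eig k0) * g k x)"
    using insert.hyps by simp
  finally have shifted_V: "(\<lambda>x. \<Sum>k\<in>S. (eig k - eig k0) * g k x) \<in> V" .
  have "T (\<lambda>x. (eig k - eig k0) * g k x) = (\<lambda>x. eig k * ((eig k - eig k0) * g k x))"
    if "k \<in> S" for k
    using that by (simp add: T_scale insert.prems(1) mult.left_commute)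
  then have shifted_components_V: "\<forall>k\<in>S. (\<lambda>x. (eig k - eig k0) * g k x) \<in> V"
    using insert.prems(2) shifted_V by (intro insert.IH) auto
  have g_S: "\<forall>k\<in>S. g k \<in> V"
  proof
    fix k assume k: "k \<in> S"
    then have "eig k - eig k0 \<noteq> 0"
      using insert.prems(2) insert.hyps(2) by (auto simp: inj_on_def)
    moreover have "(\<lambda>x. inverse (eig k - eig k0) * ((eig k - eig k0) * g k x)) \<in> V"
      using scale shifted_components_V k by blast
    ultimately show "g k \<in> V"
      by (simp add: mult.assoc[symmetric])
  qed
  have "(\<lambda>x. ?f x + (-1) * (\<Sum>k\<in>S. g k x)) \<in> V"
    using add[OF insert.prems(3) scale[OF V_sum[OF insert.hyps(1) g_S]]] .
  also have "(\<lambda>x. ?f x + (-1) * (\<Sum>k\<in>S. g k x)) = g k0"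
    using insert.hyps by auto
  finally show ?case
    using g_S by simp
qed

definition constant_on_blocks :: "'a set set \<Rightarrow> ('a \<Rightarrow> 'b) \<Rightarrow> bool" where
  "constant_on_blocks P f \<longleftrightarrow> (\<forall>L\<in>P. \<forall>x\<in>L. \<forall>y\<in>L. f x = f y)"

lemma constant_on_blocksD: "constant_on_blocks P f \<Longrightarrow> L \<in> P \<Longrightarrow> x \<in> L \<Longrightarrow> y \<in> L \<Longrightarrow> f x = f y"
  unfolding constant_on_blocks_def by blast

lemma constant_on_blocks_comp:
  assumes "constant_on_blocks P f"
  shows "constant_on_blocks P (\<lambda>x. g (f x))"
  unfolding constant_on_blocks_def
  using constant_on_blocksD[OF assms] by (intro ballI arg_cong[where f = g])

lemma constant_on_blocks_add:
  assumes "constant_on_blocks P f" "constant_on_blocks P g"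
  shows "constant_on_blocks P (\<lambda>x. f x + g x)"
  unfolding constant_on_blocks_def
  using constant_on_blocksD[OF assms(1)] constant_on_blocksD[OF assms(2)]
  by (intro ballI arg_cong2[where f = "(+)"])

lemma constant_on_blocks_sum:
  assumes "\<And>k. k \<in> A \<Longrightarrow> constant_on_blocks P (u k)"
  shows "constant_on_blocks P (\<lambda>x. \<Sum>k\<in>A. u k x)"
  unfolding constant_on_blocks_def
proof (intro ballI)
  fix L x y assume Lxy: "L \<in> P" "x \<in> L" "y \<in> L"
  have "u k x = u k y" if "k \<in> A" for k
    using constant_on_blocksD[OF assms[OF that] Lxy] .
  then show "(\<Sum>k\<in>A. u k x) = (\<Sum>k\<in>A. u k y)"
    by (rule sum.cong[OF refl])
qed

lemma constant_on_blocks_indicator: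
  assumes "disjoint P" "M \<in> P"
  shows "constant_on_blocks P (\<lambda>y. if y \<in> M then 1 else 0 :: real)"
  using assms unfolding constant_on_blocks_def disjoint_def by auto

lemma constant_on_blocks_insect_op:
  assumes "insect_lumpable q n P" "constant_on_blocks P f"
  shows "constant_on_blocks P (insect_op q n f)"
  unfolding constant_on_blocks_def
proof (intro ballI)
  fix L x x' assume L: "L \<in> P" and x: "x \<in> L" and x': "x' \<in> L"
  have part: "partition_on (words q n) P"
    using assms(1) by (simp add: insect_lumpable_def)
  have "(\<Sum>y\<in>M. insect_p q n x y * f y) = (\<Sum>y\<in>M. insect_p q n x' y * f y)" if M: "M \<in> P" for M
  proof -
    obtain c where c: "\<And>y. y \<in> M \<Longrightarrow> f y = c"
      using assms(2) M unfolding constant_on_blocks_def by blast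
    then have "(\<Sum>y\<in>M. insect_p q n z y * f y) = c * (\<Sum>y\<in>M. insect_p q n z y)" for z
      by (simp add: sum_distrib_left mult.commute)
    moreover have "(\<Sum>y\<in>M. insect_p q n x y) = (\<Sum>y\<in>M. insect_p q n x' y)"
      using assms(1) L M x x' unfolding insect_lumpable_def by blast
    ultimately show ?thesis
      by simp
  qed
  moreover have "x \<in> words q n" "x' \<in> words q n"
    using partition_onD1[OF part] L x x' by auto
  ultimately show "insect_op q n f x = insect_op q n f x'"
    unfolding insect_op_def sum.partition[OF finite_words part] by simp
qed

lemma constant_on_blocks_prefix_avg:
  assumes "q \<ge> 2" "n \<ge> 1" "partition_on (words q n) P"
    and op_invariant: "\<And>f. constant_on_blocks P f \<Longrightarrow> constant_on_blocks P (insect_op q n f)"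
    and "constant_on_blocks P f" "j \<le> n"
  shows "constant_on_blocks P (prefix_avg q n j f)"
proof -
  let ?V = "Collect (constant_on_blocks P)"
  have "prefix_avg q n n f x = f x" if "L \<in> P" "x \<in> L" for L x
    using that partition_onD1[OF assms(3)] by (intro prefix_avg_full) blast
  then have "constant_on_blocks P (prefix_avg q n n f)"
    using assms(5) unfolding constant_on_blocks_def by metis
  then have sum_V: "(\<lambda>x. \<Sum>k\<in>{0..n}. prefix_avg_increment q n k f x) \<in> ?V"
    by (simp add: sum_prefix_avg_increment)
  have "\<forall>k\<in>{0..n}. prefix_avg_increment q n k f \<in> ?V"
  proof (rule eigencomponents_in_invariant_subspace[where T = "insect_op q n" and eig = "insect_eigenvalue q n"])
    show "insect_op q n (\<lambda>x. u x + v x) = (\<lambda>x. insect_op q n u x + insect_op q n v x)" for u v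
      by (auto simp: insect_op_def distrib_left sum.distrib)
    show "insect_op q n (\<lambda>x. c * u x) = (\<lambda>x. c * insect_op q n u x)" for c u
      by (auto simp: insect_op_def sum_distrib_left mult.left_commute)
    show "insect_op q n (prefix_avg_increment q n k f) = (\<lambda>x. insect_eigenvalue q n k * prefix_avg_increment q n k f x)"
      if "k \<in> {0..n}" for k
      using that assms(1,2) by (intro insect_op_prefix_avg_increment) auto
    show "inj_on (insect_eigenvalue q n) {0..n}"
      using assms(1) by (rule inj_on_insect_eigenvalue)
    show "(\<lambda>x. u x + v x) \<in> ?V" if "u \<in> ?V" "v \<in> ?V" for u v
      using that by (simp add: constant_on_blocks_add)
    show "(\<lambda>x. c * u x) \<in> ?V" if "u \<in> ?V" for c u
      using that constant_on_blocks_comp[of P u "\<lambda>t. c * t"] by simp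
    show "(\<lambda>x. \<Sum>k\<in>{0..n}. prefix_avg_increment q n k f x) \<in> ?V"
      by (fact sum_V)
  qed (simp_all add: op_invariant)
  then have "constant_on_blocks P (\<lambda>x. \<Sum>k\<in>{0..j}. prefix_avg_increment q n k f x)"
    using assms(6) by (intro constant_on_blocks_sum) auto
  then show ?thesis
    by (simp add: sum_prefix_avg_increment)
qed

section \<open>Truncating the blocks\<close>

lemma butlast_in_image_iff_prefix_avg_pos:
  assumes "M \<subseteq> words q (Suc m)" "x \<in> words q (Suc m)" "q \<ge> 1"
  shows "butlast x \<in> butlast ` M \<longleftrightarrow> prefix_avg q (Suc m) m (\<lambda>y. if y \<in> M then 1 else 0) x > 0"
proof -
  have "butlast y = butlast x \<longleftrightarrow> take m y = take m x" if "y \<in> M" for y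
    using that assms by (auto simp: words_def butlast_conv_take)
  then show ?thesis
    using prefix_avg_indicator_pos_iff[OF assms] by (metis image_iff)
qed

lemma butlast_blocks_meet_imp_eq:
  assumes part: "partition_on (words q (Suc m)) P" and "q \<ge> 1"
    and avg_invariant: "\<And>f. constant_on_blocks P f \<Longrightarrow> constant_on_blocks P (prefix_avg q (Suc m) m f)"
    and L: "L \<in> P" and M: "M \<in> P" and "x \<in> L" "y \<in> M" "butlast x = butlast y"
  shows "butlast ` L \<subseteq> butlast ` M"
proof
  let ?h = "prefix_avg q (Suc m) m (\<lambda>y. if y \<in> M then 1 else 0)"
  have sub: "A \<subseteq> words q (Suc m)" if "A \<in> P" for A
    using that partition_onD1[OF part] by blast
  have h_const: "constant_on_blocks P ?h"
    using constant_on_blocks_indicator[OF partition_onD2[OF part] M] by (rule avg_invariant)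
  have h_pos_iff: "butlast u \<in> butlast ` M \<longleftrightarrow> ?h u > 0" if "u \<in> L" for u
    using butlast_in_image_iff_prefix_avg_pos[OF sub[OF M] _ assms(2)] sub[OF L] that by blast
  fix w assume "w \<in> butlast ` L"
  then obtain z where z: "z \<in> L" "w = butlast z"
    by blast
  have "?h x > 0"
    using h_pos_iff[OF assms(6)] assms(7,8) by simp
  moreover have "?h z = ?h x"
    using constant_on_blocksD[OF h_const L z(1) assms(6)] .
  ultimately show "w \<in> butlast ` M"
    using h_pos_iff[OF z(1)] z(2) by simp
qed

lemma partition_on_butlast_blocks:
  assumes part: "partition_on (words q (Suc m)) P" and "q \<ge> 1"
    and avg_invariant: "\<And>f. constant_on_blocks P f \<Longrightarrow> constant_on_blocks P (prefix_avg q (Suc m) m f)"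
  shows "partition_on (words q m) ((\<lambda>L. butlast ` L) ` P)"
proof (rule partition_onI)
  show "\<Union>((\<lambda>L. butlast ` L) ` P) = words q m"
    unfolding image_Union[symmetric] partition_onD1[OF part, symmetric] by (rule butlast_words[OF assms(2)])
  show "{} \<notin> (\<lambda>L. butlast ` L) ` P"
    using partition_onD3[OF part] by auto
  fix A B assume "A \<in> (\<lambda>L. butlast ` L) ` P" "B \<in> (\<lambda>L. butlast ` L) ` P" "A \<noteq> B"
  then obtain L M where L: "L \<in> P" "A = butlast ` L" and M: "M \<in> P" "B = butlast ` M"
    by blast
  show "disjnt A B"
  proof (rule ccontr)
    assume "\<not> disjnt A B"
    then obtain x y where x: "x \<in> L" and y: "y \<in> M" and xy: "butlast x = butlast y"
      unfolding disjnt_def L(2) M(2) by blast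
    have "A = B"
      unfolding L(2) M(2)
      using butlast_blocks_meet_imp_eq[OF assms L(1) M(1) x y xy]
        butlast_blocks_meet_imp_eq[OF assms M(1) L(1) y x xy[symmetric]]
      by (rule subset_antisym)
    with \<open>A \<noteq> B\<close> show False ..
  qed
qed

lemma butlast_blocks_lumpable:
  assumes part: "partition_on (words q (Suc m)) P" and "q \<ge> 1" "m \<ge> 1"
    and avg_invariant: "\<And>f j. constant_on_blocks P f \<Longrightarrow> j \<le> Suc m \<Longrightarrow> constant_on_blocks P (prefix_avg q (Suc m) j f)"
    and L: "L \<in> P" and M: "M \<in> P" and "x \<in> L" "x' \<in> L"
  shows "(\<Sum>y\<in>butlast ` M. insect_p q m (butlast x) y) = (\<Sum>y\<in>butlast ` M. insect_p q m (butlast x') y)"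
proof -
  let ?W = "words q (Suc m)"
  let ?h = "\<lambda>y. if butlast y \<in> butlast ` M then 1 else 0 :: real"
  have sub: "A \<subseteq> ?W" if "A \<in> P" for A
    using that partition_onD1[OF part] by blast
  have xW: "x \<in> ?W" "x' \<in> ?W"
    using L sub assms(7,8) by auto
  have M_words: "butlast ` M \<subseteq> words q m"
    using sub[OF M] butlast_words[OF assms(2)] by blast
  let ?g = "prefix_avg q (Suc m) m (\<lambda>y. if y \<in> M then 1 else 0)"
  have "constant_on_blocks P ?g"
    using constant_on_blocks_indicator[OF partition_onD2[OF part] M] by (rule avg_invariant) simp
  then have "constant_on_blocks P (\<lambda>y. if ?g y > 0 then 1 else 0 :: real)"
    by (rule constant_on_blocks_comp)
  moreover have "?h y = (if ?g y > 0 then 1 else 0)" if "L \<in> P" "y \<in> L" for L y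
    using that sub butlast_in_image_iff_prefix_avg_pos[OF sub[OF M] _ assms(2), of y] by auto
  ultimately have "constant_on_blocks P ?h"
    unfolding constant_on_blocks_def by metis
  then have h_avg_const: "prefix_avg q (Suc m) j ?h x = prefix_avg q (Suc m) j ?h x'" if "j \<le> m" for j
    using constant_on_blocksD[OF avg_invariant L assms(7,8)] that by simp
  \<comment> \<open>a prefix class of length \<open>j \<le> m\<close> in \<open>X\<^sup>m\<close> lifts to \<open>q\<close> times as many words of \<open>X\<^sup>m\<^sup>+\<^sup>1\<close>\<close>
  have lift: "real q * (\<Sum>y\<in>words q m. if take j y = take j (butlast z) then (if y \<in> butlast ` M then 1 else 0) else 0)
      = real q ^ (Suc m - j) * prefix_avg q (Suc m) j ?h z" if "z \<in> ?W" "j \<le> m" for z j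
    using that assms(2)
    by (simp add: sum_same_prefix_butlast[where g = "\<lambda>y. if y \<in> butlast ` M then 1 else 0"]
        sum_same_prefix_eq_prefix_avg)
  have "(\<Sum>y\<in>words q m. if take j y = take j (butlast x) then (if y \<in> butlast ` M then 1 else 0) else 0 :: real)
      = (\<Sum>y\<in>words q m. if take j y = take j (butlast x') then (if y \<in> butlast ` M then 1 else 0) else 0)"
    (is "?lhs = ?rhs") if "j \<le> m" for j
  proof -
    have "real q * ?lhs = real q * ?rhs"
      using lift[OF xW(1) that] lift[OF xW(2) that] h_avg_const[OF that] by simp
    then show ?thesis
      using assms(2) by simp
  qed
  then show ?thesis
    unfolding sum_insect_p_eq_sum_prefix[OF assms(3) M_words] by simp
qed

theorem lemma14:
  fixes q n :: nat and P :: "nat list set set"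
  assumes "q \<ge> 2" and "n \<ge> 2"
    and "insect_lumpable q n P"
  shows "insect_lumpable q (n - 1) ((\<lambda>L. butlast ` L) ` P)"
proof -
  obtain m where n: "n = Suc m" and m: "m \<ge> 1"
    using assms(2) by (cases n) auto
  have q: "q \<ge> 1"
    using assms(1) by simp
  have part: "partition_on (words q (Suc m)) P"
    using assms(3) n by (simp add: insect_lumpable_def)
  have avg_invariant: "constant_on_blocks P (prefix_avg q (Suc m) j f)"
    if "constant_on_blocks P f" "j \<le> Suc m" for f j
    by (rule constant_on_blocks_prefix_avg[OF assms(1) _ part
        constant_on_blocks_insect_op[OF assms(3)[unfolded n]] that]) simp
  have "(\<Sum>y\<in>M'. insect_p q m u y) = (\<Sum>y\<in>M'. insect_p q m u' y)"
    if L': "L' \<in> (\<lambda>L. butlast ` L) ` P" and M': "M' \<in> (\<lambda>L. butlast ` L) ` P"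
      and u: "u \<in> L'" "u' \<in> L'" for L' M' u u'
  proof -
    obtain L M where L: "L \<in> P" "L' = butlast ` L" and M: "M \<in> P" "M' = butlast ` M"
      using L' M' by blast
    obtain x x' where x: "x \<in> L" "u = butlast x" and x': "x' \<in> L" "u' = butlast x'"
      using u L(2) by blast
    show ?thesis
      unfolding M(2) x(2) x'(2) by (rule butlast_blocks_lumpable[OF part q m avg_invariant L(1) M(1) x(1) x'(1)])
  qed
  moreover have "partition_on (words q m) ((\<lambda>L. butlast ` L) ` P)"
    using avg_invariant by (intro partition_on_butlast_blocks[OF part q]) simp
  ultimately show ?thesis
    unfolding insect_lumpable_def n diff_Suc_1 by blast
qed

end
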